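(* Let $R$ be a ring with identity, ${}_RM$ a finitely generated semisimple left $R$-module, and $\varphi:M\to M$ an indecomposable nilpotent element of the ring $\mathrm{Hom}_R(M,M)$. Let $d=\dim_R(M)$ and let $n$ be the index of nilpotency of $\varphi$ ($\varphi^n=0\ne\varphi^{n-1}$). For $\psi\in\mathrm{Hom}_R(M,M)$ the following are equivalent: (1) $\psi\circ\varphi=\varphi\circ\psi$; (2) there exist an $R$-generating set $\{y_j\in M\mid1\le j\le d\}$ of ${}_RM$ and elements $a_1,\dots,a_n\in R$ such that for all $1\le j\le d$ \[a_1y_j+a_2\varphi(y_j)+\cdots+a_n\varphi^{n-1}(y_j)=\psi(y_j)\] and \[a_1\varphi(y_j)+a_2\varphi(\varphi(y_j))+\cdots+a_n\varphi^{n-1}(\varphi(y_j))=\psi(\varphi(y_j)).\]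
   Context: A nilpotent element $s$ of a ring $S$ is decomposable if $es=se$ for some idempotent $e\in S$ with $0\ne e\ne1$, and indecomposable otherwise. $\dim_R$ denotes composition length. *)

theory Defs
  imports Main
begin

text \<open>A left module over the ring 'r (with identity) whose underlying abelian
group is the whole type 'm, given by a scalar multiplication.\<close>
definition lmodule :: "('r::ring_1 \<Rightarrow> 'm::ab_group_add \<Rightarrow> 'm) \<Rightarrow> bool" where
  "lmodule s \<longleftrightarrow>
     (\<forall>a x y. s a (x + y) = s a x + s a y) \<and>
     (\<forall>a b x. s (a + b) x = s a x + s b x) \<and>
     (\<forall>a b x. s (a * b) x = s a (s b x)) \<and>
     (\<forall>x. s 1 x = x)"

definition submodule :: "('r::ring_1 \<Rightarrow> 'm::ab_group_add \<Rightarrow> 'm) \<Rightarrow> 'm set \<Rightarrow> bool" where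
  "submodule s N \<longleftrightarrow> 0 \<in> N \<and> (\<forall>x\<in>N. \<forall>y\<in>N. x + y \<in> N) \<and> (\<forall>a. \<forall>x\<in>N. s a x \<in> N)"

definition rspan :: "('r::ring_1 \<Rightarrow> 'm::ab_group_add \<Rightarrow> 'm) \<Rightarrow> 'm set \<Rightarrow> 'm set" where
  "rspan s A = \<Inter> {N. submodule s N \<and> A \<subseteq> N}"

definition fin_gen :: "('r::ring_1 \<Rightarrow> 'm::ab_group_add \<Rightarrow> 'm) \<Rightarrow> bool" where
  "fin_gen s \<longleftrightarrow> (\<exists>A. finite A \<and> rspan s A = UNIV)"

definition simple_submodule :: "('r::ring_1 \<Rightarrow> 'm::ab_group_add \<Rightarrow> 'm) \<Rightarrow> 'm set \<Rightarrow> bool" where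
  "simple_submodule s N \<longleftrightarrow> submodule s N \<and> N \<noteq> {0} \<and>
     (\<forall>L. submodule s L \<and> L \<subseteq> N \<longrightarrow> L = {0} \<or> L = N)"

definition semisimple :: "('r::ring_1 \<Rightarrow> 'm::ab_group_add \<Rightarrow> 'm) \<Rightarrow> bool" where
  "semisimple s \<longleftrightarrow> rspan s (\<Union> {N. simple_submodule s N}) = UNIV"

definition rhom :: "('r::ring_1 \<Rightarrow> 'm::ab_group_add \<Rightarrow> 'm) \<Rightarrow> ('m \<Rightarrow> 'm) \<Rightarrow> bool" where
  "rhom s f \<longleftrightarrow> (\<forall>x y. f (x + y) = f x + f y) \<and> (\<forall>a x. f (s a x) = s a (f x))"

definition comp_series :: "('r::ring_1 \<Rightarrow> 'm::ab_group_add \<Rightarrow> 'm) \<Rightarrow> (nat \<Rightarrow> 'm set) \<Rightarrow> nat \<Rightarrow> bool" where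
  "comp_series s N d \<longleftrightarrow> N 0 = {0} \<and> N d = UNIV \<and> (\<forall>i\<le>d. submodule s (N i)) \<and>
     (\<forall>i<d. N i \<subset> N (Suc i) \<and>
        \<not> (\<exists>L. submodule s L \<and> N i \<subset> L \<and> L \<subset> N (Suc i)))"

text \<open>Composition length dim_R(M).\<close>
definition comp_length :: "('r::ring_1 \<Rightarrow> 'm::ab_group_add \<Rightarrow> 'm) \<Rightarrow> nat" where
  "comp_length s = (LEAST d. \<exists>N. comp_series s N d)"

definition nilpotent_endo :: "('m::ab_group_add \<Rightarrow> 'm) \<Rightarrow> bool" where
  "nilpotent_endo f \<longleftrightarrow> (\<exists>k. (f ^^ k) = (\<lambda>_. 0))"

definition indecomposable_nilpotent ::
  "('r::ring_1 \<Rightarrow> 'm::ab_group_add \<Rightarrow> 'm) \<Rightarrow> ('m \<Rightarrow> 'm) \<Rightarrow> bool" where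
  "indecomposable_nilpotent s f \<longleftrightarrow> rhom s f \<and> nilpotent_endo f \<and>
     \<not> (\<exists>e. rhom s e \<and> e \<circ> e = e \<and> e \<noteq> (\<lambda>_. 0) \<and> e \<noteq> id \<and> e \<circ> f = f \<circ> e)"

end

theory Submission
  imports Defs "HOL-Library.Set_Algebras"
begin

text \<open>
  Since M is semisimple and \<phi>^(n-1) \<noteq> 0, some simple submodule S is not killed by \<phi>^(n-1);
  pick w \<noteq> 0 in S, so that R w = S and \<phi>^(n-1) is injective on R w. A relation
  \<Sum>k<n. \<phi>^k (a_k w) = 0 then forces every a_k w = 0 (apply \<phi>^(n-1-i) for increasing i).
  Take a complement V of R \<phi>^(n-1) w containing \<Sum>k<n-1. R \<phi>^k w; the projection onto
  R \<phi>^(n-1) w along V, pulled back to R w and conjugated by powers of \<phi>, gives an idempotent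
  endomorphism commuting with \<phi> whose image is \<Sum>k<n. R \<phi>^k w. Indecomposability makes it
  the identity, so every element is \<Sum>k<n. a_k \<phi>^k w. Then the kernels of the powers of \<phi>
  form a composition series of length n, whence d = n by the Jordan-Hoelder bound, and the
  elements y_j = \<phi>^(j-1) w generate M. If \<psi> commutes with \<phi>, the coefficients of
  \<psi> w = \<Sum>a_i \<phi>^(i-1) w work for every \<phi>^m w; conversely \<psi>\<phi> and \<phi>\<psi> are R-linear
  and agree on the generators.
\<close>

section \<open>Submodules and homomorphisms\<close>

locale left_module =
  fixes sm :: "'r::ring_1 \<Rightarrow> 'm::ab_group_add \<Rightarrow> 'm"
  assumes lmodule: "lmodule sm"
begin

lemma scale_right_distrib: "sm a (x + y) = sm a x + sm a y"
  using lmodule unfolding lmodule_def by blast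

lemma scale_left_distrib: "sm (a + b) x = sm a x + sm b x"
  using lmodule unfolding lmodule_def by blast

lemma scale_scale: "sm (a * b) x = sm a (sm b x)"
  using lmodule unfolding lmodule_def by blast

lemma scale_one [simp]: "sm 1 x = x"
  using lmodule unfolding lmodule_def by blast

lemma scale_zero_right [simp]: "sm a 0 = 0"
  using scale_right_distrib[of a 0 0] by simp

lemma scale_zero_left [simp]: "sm 0 x = 0"
  using scale_left_distrib[of 0 0 x] by simp

lemma scale_minus_left: "sm (- a) x = - sm a x"
  using scale_left_distrib[of a "- a" x] by (simp add: eq_neg_iff_add_eq_0 add.commute)

lemma scale_left_diff_distrib: "sm (a - b) x = sm a x - sm b x"
  using scale_left_distrib[of a "- b" x] by (simp add: scale_minus_left)

lemma scale_minus_right: "sm a (- x) = - sm a x"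
  using scale_right_distrib[of a x "- x"] by (simp add: eq_neg_iff_add_eq_0 add.commute)

lemma scale_right_diff_distrib: "sm a (x - y) = sm a x - sm a y"
  using scale_right_distrib[of a x "- y"] by (simp add: scale_minus_right)

lemma scale_sum_right: "sm a (sum f A) = (\<Sum>k\<in>A. sm a (f k))"
  by (induction A rule: infinite_finite_induct) (auto simp: scale_right_distrib)

lemma submodule_zero: "submodule sm N \<Longrightarrow> 0 \<in> N"
  unfolding submodule_def by blast

lemma submodule_add: "submodule sm N \<Longrightarrow> x \<in> N \<Longrightarrow> y \<in> N \<Longrightarrow> x + y \<in> N"
  unfolding submodule_def by blast

lemma submodule_scale: "submodule sm N \<Longrightarrow> x \<in> N \<Longrightarrow> sm a x \<in> N"
  unfolding submodule_def by blast

lemma submodule_uminus: "submodule sm N \<Longrightarrow> x \<in> N \<Longrightarrow> - x \<in> N"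
  using submodule_scale[of N x "- 1"] by (simp add: scale_minus_left)

lemma submodule_diff: "submodule sm N \<Longrightarrow> x \<in> N \<Longrightarrow> y \<in> N \<Longrightarrow> x - y \<in> N"
  using submodule_add[of N x "- y"] submodule_uminus[of N y] by simp

lemma submodule_sum: "submodule sm N \<Longrightarrow> (\<And>k. k \<in> A \<Longrightarrow> f k \<in> N) \<Longrightarrow> sum f A \<in> N"
  by (induction A rule: infinite_finite_induct) (auto simp: submodule_zero submodule_add)

lemma submodule_Int: "submodule sm A \<Longrightarrow> submodule sm B \<Longrightarrow> submodule sm (A \<inter> B)"
  unfolding submodule_def by blast

lemma submodule_set_plus:
  assumes "submodule sm A" "submodule sm B"
  shows "submodule sm (A + B)"
  unfolding submodule_def
proof (intro conjI ballI allI)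
  show "0 \<in> A + B"
    using set_plus_intro[OF submodule_zero submodule_zero, OF assms] by simp
next
  fix x y assume "x \<in> A + B" "y \<in> A + B"
  then obtain a b a' b' where "x = a + b" "a \<in> A" "b \<in> B" "y = a' + b'" "a' \<in> A" "b' \<in> B"
    by (metis set_plus_elim)
  then have "x + y = (a + a') + (b + b')" "a + a' \<in> A" "b + b' \<in> B"
    using assms by (simp_all add: algebra_simps submodule_add)
  then show "x + y \<in> A + B"
    by (simp add: set_plus_intro)
next
  fix c x assume "x \<in> A + B"
  then obtain a b where "x = a + b" "a \<in> A" "b \<in> B"
    by (metis set_plus_elim)
  then show "sm c x \<in> A + B"
    using assms by (simp add: scale_right_distrib set_plus_intro submodule_scale)
qed

lemma set_plus_subset_submodule: "submodule sm P \<Longrightarrow> A \<subseteq> P \<Longrightarrow> B \<subseteq> P \<Longrightarrow> A + B \<subseteq> P"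
  by (auto elim!: set_plus_elim intro: submodule_add)

lemma submodule_Union_chain:
  assumes "C \<noteq> {}" "\<And>X. X \<in> C \<Longrightarrow> submodule sm X" "\<And>X Y. X \<in> C \<Longrightarrow> Y \<in> C \<Longrightarrow> X \<subseteq> Y \<or> Y \<subseteq> X"
  shows "submodule sm (\<Union>C)"
proof -
  obtain X where "X \<in> C"
    using assms(1) by blast
  then have "0 \<in> \<Union>C"
    using assms(2) submodule_zero by blast
  moreover have "x + y \<in> \<Union>C" if "x \<in> X" "y \<in> Y" "X \<in> C" "Y \<in> C" for x y X Y
    using assms(3)[of X Y] that assms(2)[of X] assms(2)[of Y] submodule_add by blast
  moreover have "sm a x \<in> \<Union>C" if "x \<in> X" "X \<in> C" for a x X
    using that assms(2) submodule_scale by blast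
  ultimately show ?thesis
    unfolding submodule_def by blast
qed

lemma submodule_lincombs: "submodule sm (range (\<lambda>c. \<Sum>k\<in>K. sm (c k) (v k)))"
  unfolding submodule_def
proof (intro conjI ballI allI)
  show "0 \<in> range (\<lambda>c. \<Sum>k\<in>K. sm (c k) (v k))"
    by (rule range_eqI[of _ _ "\<lambda>_. 0"]) simp
next
  fix x y assume "x \<in> range (\<lambda>c. \<Sum>k\<in>K. sm (c k) (v k))" "y \<in> range (\<lambda>c. \<Sum>k\<in>K. sm (c k) (v k))"
  then obtain b c where "x = (\<Sum>k\<in>K. sm (b k) (v k))" "y = (\<Sum>k\<in>K. sm (c k) (v k))"
    by (elim rangeE)
  then show "x + y \<in> range (\<lambda>c. \<Sum>k\<in>K. sm (c k) (v k))"
    by (intro range_eqI[of _ _ "\<lambda>k. b k + c k"]) (simp add: scale_left_distrib sum.distrib)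
next
  fix a x assume "x \<in> range (\<lambda>c. \<Sum>k\<in>K. sm (c k) (v k))"
  then obtain c where "x = (\<Sum>k\<in>K. sm (c k) (v k))"
    by (elim rangeE)
  then show "sm a x \<in> range (\<lambda>c. \<Sum>k\<in>K. sm (c k) (v k))"
    by (intro range_eqI[of _ _ "\<lambda>k. a * c k"]) (simp add: scale_scale scale_sum_right)
qed

lemma submodule_cyclic: "submodule sm (range (\<lambda>a. sm a x))"
  unfolding submodule_def
proof (intro conjI ballI allI)
  show "0 \<in> range (\<lambda>a. sm a x)"
    by (rule range_eqI[of _ _ 0]) simp
next
  fix y z assume "y \<in> range (\<lambda>a. sm a x)" "z \<in> range (\<lambda>a. sm a x)"
  then obtain b c where "y = sm b x" "z = sm c x"
    by (elim rangeE)
  then show "y + z \<in> range (\<lambda>a. sm a x)"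
    by (intro range_eqI[of _ _ "b + c"]) (simp add: scale_left_distrib)
next
  fix a y assume "y \<in> range (\<lambda>a. sm a x)"
  then obtain b where "y = sm b x"
    by (elim rangeE)
  then show "sm a y \<in> range (\<lambda>a. sm a x)"
    by (intro range_eqI[of _ _ "a * b"]) (simp add: scale_scale)
qed

lemma submodule_rspan: "submodule sm (rspan sm A)"
  unfolding rspan_def submodule_def by blast

lemma rspan_superset: "A \<subseteq> rspan sm A"
  unfolding rspan_def by blast

lemma rspan_least: "submodule sm N \<Longrightarrow> A \<subseteq> N \<Longrightarrow> rspan sm A \<subseteq> N"
  unfolding rspan_def by blast

lemma semisimple_submodule_eq_UNIV:
  assumes "semisimple sm" "submodule sm N" "\<And>L. simple_submodule sm L \<Longrightarrow> L \<subseteq> N"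
  shows "N = UNIV"
  using assms rspan_least[of N "\<Union> {L. simple_submodule sm L}"] unfolding semisimple_def by blast

lemma rhom_add: "rhom sm f \<Longrightarrow> f (x + y) = f x + f y"
  unfolding rhom_def by blast

lemma rhom_scale: "rhom sm f \<Longrightarrow> f (sm a x) = sm a (f x)"
  unfolding rhom_def by blast

lemma rhom_zero: "rhom sm f \<Longrightarrow> f 0 = 0"
  using rhom_add[of f 0 0] by simp

lemma rhom_uminus: "rhom sm f \<Longrightarrow> f (- x) = - f x"
  using rhom_add[of f x "- x"] by (simp add: rhom_zero eq_neg_iff_add_eq_0 add.commute)

lemma rhom_diff: "rhom sm f \<Longrightarrow> f (x - y) = f x - f y"
  using rhom_add[of f x "- y"] by (simp add: rhom_uminus)

lemma rhom_sum: "rhom sm f \<Longrightarrow> f (sum g A) = (\<Sum>k\<in>A. f (g k))"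
  by (induction A rule: infinite_finite_induct) (auto simp: rhom_add rhom_zero)

lemma rhom_funpow: "rhom sm f \<Longrightarrow> rhom sm (f ^^ k)"
  by (induction k) (auto simp: rhom_def)

lemma submodule_equalizer: "rhom sm f \<Longrightarrow> rhom sm g \<Longrightarrow> submodule sm {x. f x = g x}"
  unfolding submodule_def by (simp add: rhom_zero rhom_add rhom_scale)

lemma submodule_kernel: "rhom sm f \<Longrightarrow> submodule sm {x. f x = 0}"
  unfolding submodule_def by (simp add: rhom_zero rhom_add rhom_scale)

lemma rhom_eq_if_eq_on_generators:
  assumes "rspan sm A = UNIV" "rhom sm f" "rhom sm g" "\<And>x. x \<in> A \<Longrightarrow> f x = g x"
  shows "f = g"
proof -
  have "UNIV \<subseteq> {x. f x = g x}"
    using rspan_least[OF submodule_equalizer[OF assms(2,3)], of A] assms(1,4) by blast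
  then show ?thesis
    by blast
qed

lemma commute_if_polynomial_on_generators:
  assumes "rhom sm \<phi>" "rhom sm \<psi>" "rspan sm (y ` J) = UNIV"
    and "\<forall>j\<in>J. (\<Sum>i=1..n. sm (a i) ((\<phi> ^^ (i - 1)) (y j))) = \<psi> (y j) \<and>
                (\<Sum>i=1..n. sm (a i) ((\<phi> ^^ (i - 1)) (\<phi> (y j)))) = \<psi> (\<phi> (y j))"
  shows "\<psi> \<circ> \<phi> = \<phi> \<circ> \<psi>"
proof (rule rhom_eq_if_eq_on_generators[OF assms(3)])
  show "rhom sm (\<psi> \<circ> \<phi>)" "rhom sm (\<phi> \<circ> \<psi>)"
    using assms(1,2) unfolding rhom_def by auto
  fix x assume "x \<in> y ` J"
  then obtain j where "j \<in> J" "x = y j"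
    by blast
  then have "\<psi> x = (\<Sum>i=1..n. sm (a i) ((\<phi> ^^ (i - 1)) x))"
    and "\<psi> (\<phi> x) = (\<Sum>i=1..n. sm (a i) ((\<phi> ^^ (i - 1)) (\<phi> x)))"
    using assms(4) by auto
  then have "\<phi> (\<psi> x) = \<psi> (\<phi> x)"
    by (simp add: rhom_sum[OF assms(1)] rhom_scale[OF assms(1)] funpow_swap1)
  then show "(\<psi> \<circ> \<phi>) x = (\<phi> \<circ> \<psi>) x"
    by simp
qed

lemma semisimple_complement:
  assumes "semisimple sm" "submodule sm U" "submodule sm T" "U \<inter> T \<subseteq> {0}"
  obtains V where "submodule sm V" "U \<subseteq> V" "V \<inter> T \<subseteq> {0}" "V + T = UNIV"
proof -
  define \<A> where "\<A> = {V. submodule sm V \<and> U \<subseteq> V \<and> V \<inter> T \<subseteq> {0}}"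
  have "\<exists>V\<in>\<A>. \<forall>X\<in>\<A>. V \<subseteq> X \<longrightarrow> X = V"
  proof (rule subset_Zorn_nonempty)
    show "\<A> \<noteq> {}"
      using assms(2,4) unfolding \<A>_def by blast
  next
    fix C assume "C \<noteq> {}" "subset.chain \<A> C"
    then have "C \<subseteq> \<A>" "\<And>X Y. X \<in> C \<Longrightarrow> Y \<in> C \<Longrightarrow> X \<subseteq> Y \<or> Y \<subseteq> X"
      unfolding subset_chain_def by auto
    with \<open>C \<noteq> {}\<close> show "\<Union>C \<in> \<A>"
      unfolding \<A>_def using submodule_Union_chain[of C] by blast
  qed
  then obtain V where V: "submodule sm V" "U \<subseteq> V" "V \<inter> T \<subseteq> {0}"
    and maximal: "\<And>X. submodule sm X \<Longrightarrow> V \<subseteq> X \<Longrightarrow> X \<inter> T \<subseteq> {0} \<Longrightarrow> X = V"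
    unfolding \<A>_def by auto
  have VT: "submodule sm (V + T)"
    using submodule_set_plus V(1) assms(3) by blast
  have "L \<subseteq> V + T" if L: "simple_submodule sm L" for L
  proof (rule ccontr)
    assume not_in: "\<not> L \<subseteq> V + T"
    have Ls: "submodule sm L"
      using L unfolding simple_submodule_def by blast
    \<comment> \<open>By simplicity, L meets V + T trivially, so V + L still avoids T.\<close>
    have "L \<inter> (V + T) = {0} \<or> L \<inter> (V + T) = L"
      using L submodule_Int[OF Ls VT] unfolding simple_submodule_def by blast
    then have L_meet: "L \<inter> (V + T) = {0}"
      using not_in by blast
    have "(V + L) \<inter> T \<subseteq> {0}"
    proof
      fix x assume "x \<in> (V + L) \<inter> T"
      then obtain v l where vl: "x = v + l" "v \<in> V" "l \<in> L" "x \<in> T"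
        by (auto elim: set_plus_elim)
      have "l = - v + x" "- v \<in> V"
        using vl V(1) submodule_uminus by auto
      then have "l \<in> V + T"
        using vl(4) set_plus_intro by metis
      then have "l = 0"
        using L_meet vl(3) by blast
      then have "x \<in> V"
        using vl(1,2) by simp
      then show "x \<in> {0}"
        using V(3) vl(4) by blast
    qed
    moreover have "V \<subseteq> V + L"
      using set_zero_plus2[OF submodule_zero[OF Ls], of V] by (simp add: add.commute)
    ultimately have "V + L = V"
      using maximal submodule_set_plus[OF V(1) Ls] by blast
    moreover have "L \<subseteq> V + L"
      using set_zero_plus2[OF submodule_zero[OF V(1)]] .
    moreover have "V \<subseteq> V + T"
      using set_zero_plus2[OF submodule_zero[OF assms(3)], of V] by (simp add: add.commute)
    ultimately show False
      using not_in by blast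
  qed
  then have "V + T = UNIV"
    using semisimple_submodule_eq_UNIV[OF assms(1) VT] by blast
  with V show ?thesis
    using that by blast
qed

section \<open>Composition length\<close>

lemma submodule_eq_if_Int_eq_and_plus_eq:
  assumes "submodule sm A" "submodule sm A'" "submodule sm Q"
    and "A \<subseteq> A'" "A \<inter> Q = A' \<inter> Q" "A + Q = A' + Q"
  shows "A = A'"
proof -
  have "x \<in> A" if x: "x \<in> A'" for x
  proof -
    have "x \<in> A + Q"
      using assms(3,6) x set_plus_intro[OF x submodule_zero] by force
    then obtain a q where aq: "x = a + q" "a \<in> A" "q \<in> Q"
      by (auto elim: set_plus_elim)
    then have "q \<in> A'"
      using submodule_diff[OF assms(2) x, of a] assms(4) by auto
    then have "q \<in> A"
      using aq assms(5) by blast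
    then show ?thesis
      using aq submodule_add[OF assms(1)] by simp
  qed
  then show ?thesis
    using assms(4) by blast
qed

lemma strict_steps_le_series_length:
  assumes "N 0 = {0}" "N d = P" "\<forall>i\<le>d. submodule sm (N i)"
    and "\<forall>i<d. N i \<subseteq> N (Suc i) \<and> \<not> (\<exists>L. submodule sm L \<and> N i \<subset> L \<and> L \<subset> N (Suc i))"
    and "\<forall>i\<le>m. submodule sm (K i) \<and> K i \<subseteq> P" "\<forall>i j. i \<le> j \<longrightarrow> j \<le> m \<longrightarrow> K i \<subseteq> K j"
  shows "card {i. i < m \<and> K i \<subset> K (Suc i)} \<le> d"
  using assms
proof (induction d arbitrary: P K)
  case 0
  have "K i = {0}" if "i \<le> m" for i
    using "0.prems"(1,2,5) submodule_zero[of "K i"] that by auto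
  then have "{i. i < m \<and> K i \<subset> K (Suc i)} = {}"
    by fastforce
  then show ?case
    by simp
next
  case (Suc d)
  define Q where "Q = N d"
  have Q: "submodule sm Q" "Q \<subseteq> P" "submodule sm P"
    using Suc.prems unfolding Q_def by auto
  have Q_maximal: "\<not> (\<exists>L. submodule sm L \<and> Q \<subset> L \<and> L \<subset> P)"
    using Suc.prems(2,4) unfolding Q_def by auto
  have K: "submodule sm (K i)" "K i \<subseteq> P" if "i \<le> m" for i
    using Suc.prems(5) that by auto
  define steps_in_Q where "steps_in_Q = {i. i < m \<and> K i \<inter> Q \<subset> K (Suc i) \<inter> Q}"
  define steps_mod_Q where "steps_mod_Q = {i. i < m \<and> K i + Q \<subset> K (Suc i) + Q}"
  have in_Q: "card steps_in_Q \<le> d"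
    unfolding steps_in_Q_def
  proof (rule Suc.IH)
    show "\<forall>i\<le>m. submodule sm (K i \<inter> Q) \<and> K i \<inter> Q \<subseteq> Q"
      using K(1) Q(1) submodule_Int by blast
    show "\<forall>i j. i \<le> j \<longrightarrow> j \<le> m \<longrightarrow> K i \<inter> Q \<subseteq> K j \<inter> Q"
      using Suc.prems(6) by blast
  qed (use Suc.prems in \<open>auto simp: Q_def\<close>)
  \<comment> \<open>Modulo Q there is room for only one strict step, as Q is maximal in P.\<close>
  have mod_Q: "card steps_mod_Q \<le> 1"
  proof -
    have later_step_absent: "j \<notin> steps_mod_Q" if ij: "i \<in> steps_mod_Q" "i < j" for i j
    proof
      assume j: "j \<in> steps_mod_Q"
      then have m: "i < m" "j < m"
        using ij unfolding steps_mod_Q_def by auto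
      have "Q \<subseteq> K i + Q"
        using set_zero_plus2[OF submodule_zero[OF K(1)]] m by simp
      then have "Q \<subset> K (Suc i) + Q"
        using ij(1) unfolding steps_mod_Q_def by auto
      moreover have "K (Suc i) + Q \<subseteq> P" "K (Suc j) + Q \<subseteq> P"
        using K[of "Suc i"] K[of "Suc j"] m Q(2,3) set_plus_subset_submodule by auto
      moreover have "submodule sm (K (Suc i) + Q)"
        using submodule_set_plus K(1) m Q(1) by simp
      ultimately have "K (Suc i) + Q = P"
        using Q_maximal by blast
      moreover have "K (Suc i) + Q \<subseteq> K j + Q"
        using Suc.prems(6) ij(2) m by (intro set_plus_mono2) auto
      ultimately show False
        using j \<open>K (Suc j) + Q \<subseteq> P\<close> unfolding steps_mod_Q_def by auto
    qed
    have "finite steps_mod_Q"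
      unfolding steps_mod_Q_def by simp
    then show ?thesis
      using later_step_absent unfolding One_nat_def card_le_Suc0_iff_eq[OF \<open>finite steps_mod_Q\<close>]
      by (metis linorder_neqE_nat)
  qed
  have covered: "{i. i < m \<and> K i \<subset> K (Suc i)} \<subseteq> steps_in_Q \<union> steps_mod_Q"
  proof
    fix i assume "i \<in> {i. i < m \<and> K i \<subset> K (Suc i)}"
    then have i: "i < m" "K i \<subset> K (Suc i)"
      by auto
    moreover have "K i + Q \<subseteq> K (Suc i) + Q"
      using i by (intro set_plus_mono2) auto
    moreover have "K i \<inter> Q \<noteq> K (Suc i) \<inter> Q \<or> K i + Q \<noteq> K (Suc i) + Q"
      using submodule_eq_if_Int_eq_and_plus_eq[of "K i" "K (Suc i)" Q] K[of i] K[of "Suc i"] i Q(1)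
      by auto
    ultimately show "i \<in> steps_in_Q \<union> steps_mod_Q"
      unfolding steps_in_Q_def steps_mod_Q_def by auto
  qed
  have "card {i. i < m \<and> K i \<subset> K (Suc i)} \<le> card (steps_in_Q \<union> steps_mod_Q)"
    using covered by (rule card_mono[rotated]) (simp add: steps_in_Q_def steps_mod_Q_def)
  also have "\<dots> \<le> card steps_in_Q + card steps_mod_Q"
    by (rule card_Un_le)
  also have "\<dots> \<le> Suc d"
    using in_Q mod_Q by simp
  finally show ?case .
qed

lemma comp_series_length_le:
  assumes "comp_series sm N d" "comp_series sm K m"
  shows "m \<le> d"
proof -
  have strict: "K i \<subset> K (Suc i)" if "i < m" for i
    using assms(2) that by (simp add: comp_series_def)
  have mono: "K i \<subseteq> K j" if "i \<le> j" "j \<le> m" for i j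
    using that
  proof (induction j)
    case (Suc j)
    then show ?case
      using strict[of j] by (cases "i = Suc j") auto
  qed simp
  have "card {i. i < m \<and> K i \<subset> K (Suc i)} \<le> d"
  proof (rule strict_steps_le_series_length[of N])
    show "\<forall>i\<le>m. submodule sm (K i) \<and> K i \<subseteq> UNIV"
      using assms(2) by (simp add: comp_series_def)
    show "\<forall>i j. i \<le> j \<longrightarrow> j \<le> m \<longrightarrow> K i \<subseteq> K j"
      using mono by blast
  qed (use assms(1) in \<open>auto simp: comp_series_def\<close>)
  moreover have "{i. i < m \<and> K i \<subset> K (Suc i)} = {..<m}"
    using strict by auto
  ultimately show ?thesis
    by simp
qed

lemma comp_length_eq:
  assumes "comp_series sm N d"
  shows "comp_length sm = d"
proof -
  obtain K where "comp_series sm K (comp_length sm)"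
    using LeastI[of "\<lambda>d. \<exists>N. comp_series sm N d" d] assms unfolding comp_length_def by blast
  then have "d \<le> comp_length sm"
    using comp_series_length_le assms by blast
  moreover have "comp_length sm \<le> d"
    unfolding comp_length_def using assms by (blast intro: Least_le)
  ultimately show ?thesis
    by simp
qed

end

section \<open>A nilpotent endomorphism and a top vector\<close>

locale nilpotent_endomorphism = left_module sm
  for sm :: "'r::ring_1 \<Rightarrow> 'm::ab_group_add \<Rightarrow> 'm" +
  fixes \<phi> :: "'m \<Rightarrow> 'm" and n :: nat
  assumes rhom_phi: "rhom sm \<phi>"
    and phi_pow_nilpotency: "\<phi> ^^ n = (\<lambda>_. 0)"
    and phi_pow_pred_nonzero: "\<phi> ^^ (n - 1) \<noteq> (\<lambda>_. 0)"
begin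

lemma nilpotency_pos: "0 < n"
  using phi_pow_nilpotency phi_pow_pred_nonzero by (cases n) auto

lemma rhom_phi_pow: "rhom sm (\<phi> ^^ k)"
  using rhom_funpow[OF rhom_phi] .

lemma phi_pow_apply_add: "(\<phi> ^^ a) ((\<phi> ^^ b) x) = (\<phi> ^^ (a + b)) x"
  by (simp add: funpow_add)

lemma phi_pow_eq_0: "n \<le> p \<Longrightarrow> (\<phi> ^^ p) x = 0"
  using phi_pow_apply_add[of "p - n" n x] phi_pow_nilpotency rhom_zero[OF rhom_phi_pow] by simp

lemma phi_pow_scale: "(\<phi> ^^ k) (sm a x) = sm a ((\<phi> ^^ k) x)"
  using rhom_scale[OF rhom_phi_pow] .

lemma scale_phi_pow_eq_0: "sm a x = 0 \<Longrightarrow> sm a ((\<phi> ^^ k) x) = 0"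
  using phi_pow_scale[of k a x] rhom_zero[OF rhom_phi_pow] by simp

definition ker :: "nat \<Rightarrow> 'm set" where
  "ker k = {x. (\<phi> ^^ k) x = 0}"

lemma submodule_ker: "submodule sm (ker k)"
  unfolding ker_def using submodule_kernel[OF rhom_phi_pow] .

lemma ker_mono:
  assumes "i \<le> j"
  shows "ker i \<subseteq> ker j"
proof
  fix x assume "x \<in> ker i"
  moreover have "(\<phi> ^^ j) x = (\<phi> ^^ (j - i)) ((\<phi> ^^ i) x)"
    using phi_pow_apply_add[of "j - i" i x] assms by simp
  ultimately show "x \<in> ker j"
    using rhom_zero[OF rhom_phi_pow] unfolding ker_def by simp
qed

lemma ker_strict_mono:
  assumes "j < n"
  shows "ker j \<subset> ker (Suc j)"
proof -
  obtain z where z: "(\<phi> ^^ (n - 1)) z \<noteq> 0"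
    using phi_pow_pred_nonzero by auto
  have "(\<phi> ^^ j) ((\<phi> ^^ (n - 1 - j)) z) = (\<phi> ^^ (n - 1)) z"
       "(\<phi> ^^ Suc j) ((\<phi> ^^ (n - 1 - j)) z) = (\<phi> ^^ n) z"
    using assms phi_pow_apply_add[of j "n - 1 - j" z] phi_pow_apply_add[of "Suc j" "n - 1 - j" z]
    by simp_all
  then have "(\<phi> ^^ (n - 1 - j)) z \<in> ker (Suc j) - ker j"
    using z phi_pow_nilpotency unfolding ker_def by simp
  then show ?thesis
    using ker_mono[of j "Suc j"] by auto
qed

definition cyclic_vector :: "'m \<Rightarrow> bool" where
  "cyclic_vector w \<longleftrightarrow> (\<forall>x. \<exists>c. x = (\<Sum>k<n. sm (c k) ((\<phi> ^^ k) w)))"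

end

text \<open>The assumptions say that R w is a simple module on which \<phi>^(n-1) is injective.\<close>
locale top_vector = nilpotent_endomorphism sm \<phi> n
  for sm :: "'r::ring_1 \<Rightarrow> 'm::ab_group_add \<Rightarrow> 'm" and \<phi> n +
  fixes w :: 'm
  assumes top_vector_nonzero: "w \<noteq> 0"
    and top_injective: "(\<phi> ^^ (n - 1)) (sm a w) = 0 \<Longrightarrow> sm a w = 0"
    and multiple_generates: "sm a w \<noteq> 0 \<Longrightarrow> \<exists>b. sm b (sm a w) = w"
begin

lemma phi_pow_lincomb:
  "(\<phi> ^^ j) (\<Sum>k<n. sm (c k) ((\<phi> ^^ k) w)) = (\<Sum>k<n. sm (c k) ((\<phi> ^^ (j + k)) w))"
  by (simp add: rhom_sum[OF rhom_phi_pow] phi_pow_scale phi_pow_apply_add)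

lemma phi_pow_lincomb_leading:
  assumes "i < n" "\<And>k. k < i \<Longrightarrow> sm (c k) w = 0"
  shows "(\<phi> ^^ (n - 1 - i)) (\<Sum>k<n. sm (c k) ((\<phi> ^^ k) w)) = sm (c i) ((\<phi> ^^ (n - 1)) w)"
proof -
  have "sm (c k) ((\<phi> ^^ (n - 1 - i + k)) w) = (if k = i then sm (c i) ((\<phi> ^^ (n - 1)) w) else 0)"
    if "k < n" for k
  proof (cases k i rule: linorder_cases)
    case less
    then show ?thesis
      using assms(2)[OF less] by (simp add: phi_pow_scale[symmetric] rhom_zero[OF rhom_phi_pow])
  next
    case equal
    then show ?thesis
      using assms(1) by simp
  next
    case greater
    then show ?thesis
      using assms(1) phi_pow_eq_0[of "n - 1 - i + k" w] by simp
  qed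
  then show ?thesis
    using assms(1) by (simp add: phi_pow_lincomb)
qed

lemma lincomb_low_coeffs_eq_0:
  assumes "t \<le> n" "\<And>i. i < t \<Longrightarrow> (\<phi> ^^ (n - 1 - i)) (\<Sum>k<n. sm (c k) ((\<phi> ^^ k) w)) = 0"
  shows "i < t \<Longrightarrow> sm (c i) w = 0"
proof (induction i rule: less_induct)
  case (less i)
  then have "(\<phi> ^^ (n - 1)) (sm (c i) w) = 0"
    using phi_pow_lincomb_leading[of i c] assms by (simp add: phi_pow_scale)
  then show ?case
    by (rule top_injective)
qed

lemma lincomb_eq_0D:
  assumes "(\<Sum>k<n. sm (c k) ((\<phi> ^^ k) w)) = 0" "i < n"
  shows "sm (c i) w = 0"
  using lincomb_low_coeffs_eq_0[of n c i] assms rhom_zero[OF rhom_phi_pow] by simp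

definition top_multiples :: "'m set" where
  "top_multiples = range (\<lambda>a. sm a ((\<phi> ^^ (n - 1)) w))"

definition lower_span :: "'m set" where
  "lower_span = range (\<lambda>c. \<Sum>k<n - 1. sm (c k) ((\<phi> ^^ k) w))"

lemma lower_span_Int_top_multiples: "lower_span \<inter> top_multiples \<subseteq> {0}"
proof
  fix x assume "x \<in> lower_span \<inter> top_multiples"
  then obtain c a where c: "x = (\<Sum>k<n - 1. sm (c k) ((\<phi> ^^ k) w))"
    and a: "x = sm a ((\<phi> ^^ (n - 1)) w)"
    unfolding lower_span_def top_multiples_def by blast
  define c' where "c' k = (if k < n - 1 then c k else - a)" for k
  have n: "n = Suc (n - 1)"
    using nilpotency_pos by simp
  have "(\<Sum>k<n. sm (c' k) ((\<phi> ^^ k) w))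
      = (\<Sum>k<n - 1. sm (c' k) ((\<phi> ^^ k) w)) + sm (c' (n - 1)) ((\<phi> ^^ (n - 1)) w)"
    by (subst n) (simp only: sum.lessThan_Suc diff_Suc_1)
  also have "\<dots> = 0"
    using c a by (simp add: c'_def scale_minus_left)
  finally have "sm (c' (n - 1)) w = 0"
    using lincomb_eq_0D nilpotency_pos by simp
  then have "sm a w = 0"
    by (simp add: c'_def scale_minus_left)
  then show "x \<in> {0}"
    using a rhom_zero[OF rhom_phi_pow] by (simp add: phi_pow_scale[symmetric])
qed

end

context nilpotent_endomorphism
begin

lemma exists_top_vector:
  assumes "semisimple sm"
  shows "\<exists>w. top_vector sm \<phi> n w"
proof -
  have "\<exists>S. simple_submodule sm S \<and> \<not> S \<subseteq> ker (n - 1)"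
  proof (rule ccontr)
    assume "\<not> ?thesis"
    then have "ker (n - 1) = UNIV"
      using semisimple_submodule_eq_UNIV[OF assms submodule_ker] by blast
    then show False
      using phi_pow_pred_nonzero unfolding ker_def by auto
  qed
  then obtain S w where S: "simple_submodule sm S" and w: "w \<in> S" "w \<notin> ker (n - 1)"
    by blast
  have S_sub: "submodule sm S"
    and S_simple: "\<And>L. submodule sm L \<Longrightarrow> L \<subseteq> S \<Longrightarrow> L = {0} \<or> L = S"
    using S unfolding simple_submodule_def by blast+
  have multiples_in_S: "sm a w \<in> S" for a
    using submodule_scale[OF S_sub w(1)] .
  have "S \<inter> ker (n - 1) = {0}"
    using S_simple[OF submodule_Int[OF S_sub submodule_ker]] w by blast
  then have top_injective: "sm a w = 0" if "(\<phi> ^^ (n - 1)) (sm a w) = 0" for a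
    using that multiples_in_S unfolding ker_def by blast
  have "\<exists>b. sm b (sm a w) = w" if "sm a w \<noteq> 0" for a
  proof -
    have "range (\<lambda>b. sm b (sm a w)) \<subseteq> S"
      using submodule_scale[OF S_sub multiples_in_S] by blast
    moreover have "sm a w \<in> range (\<lambda>b. sm b (sm a w))"
      by (rule range_eqI[of _ _ 1]) simp
    ultimately have "range (\<lambda>b. sm b (sm a w)) = S"
      using S_simple[OF submodule_cyclic] that by blast
    then show ?thesis
      using w(1) by (metis rangeE)
  qed
  moreover have "w \<noteq> 0"
    using w(2) rhom_zero[OF rhom_phi_pow] unfolding ker_def by auto
  ultimately have "top_vector sm \<phi> n w"
    using top_injective by unfold_locales blast+
  then show ?thesis ..
qed

end

section \<open>Cyclicity of an indecomposable nilpotent endomorphism\<close>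

locale top_vector_complement = top_vector sm \<phi> n w
  for sm :: "'r::ring_1 \<Rightarrow> 'm::ab_group_add \<Rightarrow> 'm" and \<phi> n w +
  fixes V :: "'m set"
  assumes submodule_V: "submodule sm V"
    and lower_span_subset: "lower_span \<subseteq> V"
    and V_Int_top_multiples: "V \<inter> top_multiples \<subseteq> {0}"
    and V_plus_top_multiples: "V + top_multiples = UNIV"
begin

text \<open>Writing x = v + a \<phi>^(n-1) w with v \<in> V, top_preimage x = a w; this is well defined because
  \<phi>^(n-1) is injective on R w.\<close>
definition top_preimage :: "'m \<Rightarrow> 'm" where
  "top_preimage x = sm (SOME a. x - sm a ((\<phi> ^^ (n - 1)) w) \<in> V) w"

lemma top_component_exists: "\<exists>a. x - sm a ((\<phi> ^^ (n - 1)) w) \<in> V"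
proof -
  obtain v a where "x = v + sm a ((\<phi> ^^ (n - 1)) w)" "v \<in> V"
    using V_plus_top_multiples set_plus_elim unfolding top_multiples_def by blast
  then have "x - sm a ((\<phi> ^^ (n - 1)) w) \<in> V"
    by simp
  then show ?thesis ..
qed

lemma top_preimage_eq:
  assumes "x - sm a ((\<phi> ^^ (n - 1)) w) \<in> V"
  shows "top_preimage x = sm a w"
proof -
  define b where "b = (SOME a. x - sm a ((\<phi> ^^ (n - 1)) w) \<in> V)"
  have "x - sm b ((\<phi> ^^ (n - 1)) w) \<in> V"
    unfolding b_def by (rule someI_ex[OF top_component_exists])
  then have "(x - sm a ((\<phi> ^^ (n - 1)) w)) - (x - sm b ((\<phi> ^^ (n - 1)) w)) \<in> V"
    using submodule_diff[OF submodule_V assms] by blast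
  moreover have "(x - sm a ((\<phi> ^^ (n - 1)) w)) - (x - sm b ((\<phi> ^^ (n - 1)) w))
      = sm (b - a) ((\<phi> ^^ (n - 1)) w)"
    by (simp add: scale_left_diff_distrib)
  ultimately have "sm (b - a) ((\<phi> ^^ (n - 1)) w) = 0"
    using V_Int_top_multiples unfolding top_multiples_def by auto
  then have "(\<phi> ^^ (n - 1)) (sm (b - a) w) = 0"
    by (simp only: phi_pow_scale)
  then have "sm (b - a) w = 0"
    by (rule top_injective)
  then show ?thesis
    unfolding top_preimage_def b_def[symmetric] by (simp add: scale_left_diff_distrib)
qed

lemma rhom_top_preimage: "rhom sm top_preimage"
  unfolding rhom_def
proof (intro conjI allI)
  fix x y
  obtain a b where ab: "x - sm a ((\<phi> ^^ (n - 1)) w) \<in> V" "y - sm b ((\<phi> ^^ (n - 1)) w) \<in> V"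
    using top_component_exists by blast
  have "(x + y) - sm (a + b) ((\<phi> ^^ (n - 1)) w)
      = (x - sm a ((\<phi> ^^ (n - 1)) w)) + (y - sm b ((\<phi> ^^ (n - 1)) w))"
    by (simp add: scale_left_distrib algebra_simps)
  then have "(x + y) - sm (a + b) ((\<phi> ^^ (n - 1)) w) \<in> V"
    using submodule_add[OF submodule_V ab] by (simp only:)
  then have "top_preimage (x + y) = sm (a + b) w"
    by (rule top_preimage_eq)
  then show "top_preimage (x + y) = top_preimage x + top_preimage y"
    using top_preimage_eq[OF ab(1)] top_preimage_eq[OF ab(2)] by (simp add: scale_left_distrib)
next
  fix c x
  obtain a where a: "x - sm a ((\<phi> ^^ (n - 1)) w) \<in> V"
    using top_component_exists by blast
  have "sm c x - sm (c * a) ((\<phi> ^^ (n - 1)) w) = sm c (x - sm a ((\<phi> ^^ (n - 1)) w))"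
    by (simp add: scale_scale scale_right_diff_distrib)
  then have "sm c x - sm (c * a) ((\<phi> ^^ (n - 1)) w) \<in> V"
    using submodule_scale[OF submodule_V a] by simp
  then have "top_preimage (sm c x) = sm (c * a) w"
    by (rule top_preimage_eq)
  then show "top_preimage (sm c x) = sm c (top_preimage x)"
    using top_preimage_eq[OF a] by (simp add: scale_scale)
qed

lemma top_preimage_top: "top_preimage (sm a ((\<phi> ^^ (n - 1)) w)) = sm a w"
  by (rule top_preimage_eq) (simp add: submodule_zero[OF submodule_V])

lemma top_preimage_lower:
  assumes "m < n - 1"
  shows "top_preimage (sm a ((\<phi> ^^ m) w)) = 0"
proof -
  define c where "c k = (if k = m then a else 0)" for k
  have "(\<Sum>k<n - 1. sm (c k) ((\<phi> ^^ k) w)) = sm a ((\<phi> ^^ m) w)"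
    using assms by (simp add: c_def if_distrib[of "\<lambda>b. sm b _"] cong: if_cong)
  then have "sm a ((\<phi> ^^ m) w) \<in> lower_span"
    unfolding lower_span_def by (intro range_eqI[of _ _ c]) simp
  then have "sm a ((\<phi> ^^ m) w) \<in> V"
    using lower_span_subset by blast
  then have "top_preimage (sm a ((\<phi> ^^ m) w)) = sm 0 w"
    by (intro top_preimage_eq) simp
  then show ?thesis
    by simp
qed

text \<open>Summing the conjugates of top_preimage by complementary powers of \<phi> makes proj commute with \<phi>.\<close>
definition proj :: "'m \<Rightarrow> 'm" where
  "proj x = (\<Sum>k<n. (\<phi> ^^ k) (top_preimage ((\<phi> ^^ (n - 1 - k)) x)))"

lemma rhom_proj: "rhom sm proj"
  using rhom_top_preimage unfolding rhom_def proj_def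
  by (simp add: rhom_add[OF rhom_phi_pow] rhom_scale[OF rhom_phi_pow] sum.distrib scale_sum_right)

lemma proj_phi_commute: "proj (\<phi> x) = \<phi> (proj x)"
proof -
  define F where "F k = (\<phi> ^^ k) (top_preimage ((\<phi> ^^ (n - k)) x))" for k
  have "(\<phi> ^^ (n - 1 - k)) (\<phi> x) = (\<phi> ^^ (n - k)) x" if "k < n" for k
  proof -
    have "(\<phi> ^^ (n - 1 - k)) (\<phi> x) = (\<phi> ^^ Suc (n - 1 - k)) x"
      by (simp only: funpow_Suc_right o_apply)
    also have "Suc (n - 1 - k) = n - k"
      using that by simp
    finally show ?thesis .
  qed
  then have "proj (\<phi> x) = (\<Sum>k<n. F k)"
    unfolding proj_def F_def by (intro sum.cong refl) simp
  also have "\<dots> = (\<Sum>k<Suc n. F k)"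
    using phi_pow_eq_0[of n] rhom_zero[OF rhom_top_preimage] by (simp add: F_def)
  also have "\<dots> = F 0 + (\<Sum>k<n. F (Suc k))"
    by (rule sum.lessThan_Suc_shift)
  also have "F 0 = 0"
    unfolding F_def using phi_pow_eq_0[of n] rhom_zero[OF rhom_top_preimage] by simp
  also have "(\<Sum>k<n. F (Suc k)) = \<phi> (proj x)"
    unfolding proj_def F_def rhom_sum[OF rhom_phi]
    by (intro sum.cong refl) (simp add: Suc_diff_Suc)
  finally show ?thesis
    by simp
qed

lemma proj_fixes:
  assumes "j < n"
  shows "proj (sm a ((\<phi> ^^ j) w)) = sm a ((\<phi> ^^ j) w)"
proof -
  have "(\<phi> ^^ k) (top_preimage ((\<phi> ^^ (n - 1 - k)) (sm a ((\<phi> ^^ j) w))))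
      = (if k = j then sm a ((\<phi> ^^ j) w) else 0)" if "k < n" for k
  proof -
    have shift: "(\<phi> ^^ (n - 1 - k)) (sm a ((\<phi> ^^ j) w)) = sm a ((\<phi> ^^ (n - 1 - k + j)) w)"
      by (simp add: phi_pow_scale phi_pow_apply_add)
    show ?thesis
    proof (cases k j rule: linorder_cases)
      case less
      then show ?thesis
        using that shift phi_pow_eq_0[of "n - 1 - k + j"] rhom_zero[OF rhom_top_preimage]
          rhom_zero[OF rhom_phi_pow] by simp
    next
      case equal
      then show ?thesis
        using that shift top_preimage_top by (simp add: phi_pow_scale)
    next
      case greater
      then show ?thesis
        using that shift top_preimage_lower[of "n - 1 - k + j"] rhom_zero[OF rhom_phi_pow] by simp
    qed
  qed
  then show ?thesis
    using assms unfolding proj_def by simp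
qed

lemma proj_in_span: "\<exists>c. proj x = (\<Sum>k<n. sm (c k) ((\<phi> ^^ k) w))"
proof -
  have "\<exists>a. top_preimage y = sm a w" for y
    using top_component_exists top_preimage_eq by blast
  then obtain coeff where "\<And>y. top_preimage y = sm (coeff y) w"
    by metis
  then have "proj x = (\<Sum>k<n. sm (coeff ((\<phi> ^^ (n - 1 - k)) x)) ((\<phi> ^^ k) w))"
    unfolding proj_def by (simp add: phi_pow_scale)
  then show ?thesis
    by (rule exI[where x = "\<lambda>k. coeff ((\<phi> ^^ (n - 1 - k)) x)"])
qed

lemma proj_idempotent: "proj \<circ> proj = proj"
proof
  fix x
  obtain c where "proj x = (\<Sum>k<n. sm (c k) ((\<phi> ^^ k) w))"
    using proj_in_span by blast
  then show "(proj \<circ> proj) x = proj x"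
    by (simp add: rhom_sum[OF rhom_proj] proj_fixes)
qed

end

context top_vector
begin

lemma cyclic_vector_if_indecomposable:
  assumes "semisimple sm" "indecomposable_nilpotent sm \<phi>"
  shows "cyclic_vector w"
proof -
  have "submodule sm lower_span" "submodule sm top_multiples"
    unfolding lower_span_def top_multiples_def by (rule submodule_lincombs submodule_cyclic)+
  then obtain V where "submodule sm V" "lower_span \<subseteq> V"
    "V \<inter> top_multiples \<subseteq> {0}" "V + top_multiples = UNIV"
    using semisimple_complement[OF assms(1) _ _ lower_span_Int_top_multiples] by blast
  then interpret top_vector_complement sm \<phi> n w V
    by unfold_locales
  have "proj w = w"
    using proj_fixes[of 0 1] nilpotency_pos by simp
  then have "proj \<noteq> (\<lambda>_. 0)"
    using top_vector_nonzero by auto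
  moreover have "proj \<circ> \<phi> = \<phi> \<circ> proj"
    using proj_phi_commute by auto
  ultimately have "proj = id"
    using assms(2) rhom_proj proj_idempotent unfolding indecomposable_nilpotent_def by blast
  then show ?thesis
    unfolding cyclic_vector_def using proj_in_span by (metis id_apply)
qed

lemma lincomb_minus_component_in_ker:
  assumes "j < n" "(\<phi> ^^ Suc j) x = 0" "x = (\<Sum>k<n. sm (c k) ((\<phi> ^^ k) w))"
  shows "x - sm (c (n - 1 - j)) ((\<phi> ^^ (n - 1 - j)) w) \<in> ker j"
proof -
  define t where "t = n - 1 - j"
  have low: "sm (c i) w = 0" if "i < t" for i
  proof (rule lincomb_low_coeffs_eq_0[of t c i])
    fix i assume "i < t"
    then have "n - 1 - i = (n - 1 - i - Suc j) + Suc j"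
      using t_def by arith
    then have "(\<phi> ^^ (n - 1 - i)) x = (\<phi> ^^ (n - 1 - i - Suc j)) ((\<phi> ^^ Suc j) x)"
      by (metis phi_pow_apply_add)
    then show "(\<phi> ^^ (n - 1 - i)) (\<Sum>k<n. sm (c k) ((\<phi> ^^ k) w)) = 0"
      using assms(2,3) rhom_zero[OF rhom_phi_pow] by simp
  qed (use that t_def in auto)
  have "sm (c k) ((\<phi> ^^ (j + k)) w) = (if k = t then sm (c t) ((\<phi> ^^ (j + t)) w) else 0)"
    if "k < n" for k
  proof (cases k t rule: linorder_cases)
    case less
    then show ?thesis
      using low[OF less] scale_phi_pow_eq_0 by simp
  next
    case equal
    then show ?thesis
      by simp
  next
    case greater
    then show ?thesis
      using assms(1) phi_pow_eq_0[of "j + k" w] t_def by simp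
  qed
  then have "(\<phi> ^^ j) x = sm (c t) ((\<phi> ^^ (j + t)) w)"
    using assms(1,3) t_def by (simp add: phi_pow_lincomb)
  then show ?thesis
    unfolding ker_def t_def by (simp add: rhom_diff[OF rhom_phi_pow] phi_pow_scale phi_pow_apply_add)
qed

lemma ker_Suc_minimal_over_ker:
  assumes "cyclic_vector w" "j < n" "submodule sm L" "ker j \<subset> L" "L \<subseteq> ker (Suc j)"
  shows "L = ker (Suc j)"
proof -
  define t where "t = n - 1 - j"
  obtain x where x: "x \<in> L" "x \<notin> ker j"
    using assms(4) by blast
  obtain c where c: "x = (\<Sum>k<n. sm (c k) ((\<phi> ^^ k) w))"
    using assms(1) unfolding cyclic_vector_def by blast
  define u where "u = sm (c t) ((\<phi> ^^ t) w)"
  have rest: "x - u \<in> ker j"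
    using lincomb_minus_component_in_ker[OF assms(2) _ c] x assms(5) unfolding u_def t_def ker_def
    by blast
  then have "u \<in> L"
    using submodule_diff[OF assms(3) x(1), of "x - u"] assms(4) by auto
  have "u \<notin> ker j"
    using rest x(2) submodule_add[OF submodule_ker rest, of u] by auto
  then have "sm (c t) w \<noteq> 0"
    using scale_phi_pow_eq_0 rhom_zero[OF rhom_phi_pow] unfolding u_def ker_def by auto
  then obtain b where b: "sm b (sm (c t) w) = w"
    using multiple_generates by blast
  \<comment> \<open>Modulo ker j, every y in ker (Suc j) is a multiple of u, because u generates R \<phi>^t w.\<close>
  have "y \<in> L" if y: "y \<in> ker (Suc j)" for y
  proof -
    obtain c' where c': "y = (\<Sum>k<n. sm (c' k) ((\<phi> ^^ k) w))"
      using assms(1) unfolding cyclic_vector_def by blast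
    have "y - sm (c' t) ((\<phi> ^^ t) w) \<in> L"
      using lincomb_minus_component_in_ker[OF assms(2) _ c'] y assms(4) unfolding t_def ker_def
      by blast
    moreover have "sm (c' t) ((\<phi> ^^ t) w) = sm (c' t * b) u"
      using b unfolding u_def by (simp add: scale_scale phi_pow_scale[symmetric])
    then have "sm (c' t) ((\<phi> ^^ t) w) \<in> L"
      using submodule_scale[OF assms(3) \<open>u \<in> L\<close>] by simp
    ultimately show ?thesis
      using submodule_add[OF assms(3)] by fastforce
  qed
  then show ?thesis
    using assms(5) by blast
qed

lemma comp_series_ker:
  assumes "cyclic_vector w"
  shows "comp_series sm ker n"
  unfolding comp_series_def
proof (intro conjI allI impI)
  show "ker 0 = {0}" "ker n = UNIV"
    unfolding ker_def using phi_pow_nilpotency by simp_all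
  show "submodule sm (ker i)" for i
    by (rule submodule_ker)
  fix i assume "i < n"
  then show "ker i \<subset> ker (Suc i)"
    by (rule ker_strict_mono)
  show "\<not> (\<exists>L. submodule sm L \<and> ker i \<subset> L \<and> L \<subset> ker (Suc i))"
    using ker_Suc_minimal_over_ker[OF assms \<open>i < n\<close>] by blast
qed

lemma rspan_phi_pow_orbit:
  assumes "cyclic_vector w"
  shows "rspan sm ((\<lambda>j. (\<phi> ^^ (j - 1)) w) ` {1..n}) = UNIV"
proof -
  have "(\<phi> ^^ k) w \<in> rspan sm ((\<lambda>j. (\<phi> ^^ (j - 1)) w) ` {1..n})" if "k < n" for k
    using that by (intro subsetD[OF rspan_superset] image_eqI[of _ _ "Suc k"]) auto
  then have "(\<Sum>k<n. sm (c k) ((\<phi> ^^ k) w)) \<in> rspan sm ((\<lambda>j. (\<phi> ^^ (j - 1)) w) ` {1..n})" for c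
    by (intro submodule_sum[OF submodule_rspan] submodule_scale[OF submodule_rspan]) auto
  then show ?thesis
    using assms unfolding cyclic_vector_def by (metis UNIV_eq_I)
qed

lemma polynomial_on_orbit_if_commute:
  assumes "cyclic_vector w" "rhom sm \<psi>" "\<psi> \<circ> \<phi> = \<phi> \<circ> \<psi>"
  shows "\<exists>y a. rspan sm (y ` {1..n}) = UNIV \<and>
    (\<forall>j\<in>{1..n}. (\<Sum>i=1..n. sm (a i) ((\<phi> ^^ (i - 1)) (y j))) = \<psi> (y j) \<and>
                 (\<Sum>i=1..n. sm (a i) ((\<phi> ^^ (i - 1)) (\<phi> (y j)))) = \<psi> (\<phi> (y j)))"
proof -
  obtain c where c: "\<psi> w = (\<Sum>k<n. sm (c k) ((\<phi> ^^ k) w))"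
    using assms(1) unfolding cyclic_vector_def by blast
  have commute_pow: "\<psi> ((\<phi> ^^ m) x) = (\<phi> ^^ m) (\<psi> x)" for m x
    using assms(3) by (induction m) (simp_all add: fun_eq_iff)
  have orbit: "\<psi> ((\<phi> ^^ m) w) = (\<Sum>i=1..n. sm (c (i - 1)) ((\<phi> ^^ (i - 1)) ((\<phi> ^^ m) w)))" for m
  proof -
    have "\<psi> ((\<phi> ^^ m) w) = (\<Sum>k<n. sm (c k) ((\<phi> ^^ k) ((\<phi> ^^ m) w)))"
      using c commute_pow
      by (simp add: rhom_sum[OF rhom_phi_pow] phi_pow_scale phi_pow_apply_add add.commute)
    also have "\<dots> = (\<Sum>i=1..n. sm (c (i - 1)) ((\<phi> ^^ (i - 1)) ((\<phi> ^^ m) w)))"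
      by (simp add: sum.atLeast1_atMost_eq)
    finally show ?thesis .
  qed
  have "\<phi> ((\<phi> ^^ (j - 1)) w) = (\<phi> ^^ j) w" if "j \<in> {1..n}" for j
    using that by (cases j) auto
  then show ?thesis
    using rspan_phi_pow_orbit[OF assms(1)] orbit
    by (intro exI[of _ "\<lambda>j. (\<phi> ^^ (j - 1)) w"] exI[of _ "\<lambda>i. c (i - 1)"]) simp
qed

end

theorem theorem4p8:
  fixes smult :: "'r::ring_1 \<Rightarrow> 'm::ab_group_add \<Rightarrow> 'm"
    and \<phi> \<psi> :: "'m \<Rightarrow> 'm" and d n :: nat
  assumes "lmodule smult"
    and "fin_gen smult"
    and "semisimple smult"
    and "rhom smult \<phi>"
    and "indecomposable_nilpotent smult \<phi>"
    and "d = comp_length smult"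
    and "(\<phi> ^^ n) = (\<lambda>_. 0)" and "(\<phi> ^^ (n - 1)) \<noteq> (\<lambda>_. 0)"
    and "rhom smult \<psi>"
  shows "\<psi> \<circ> \<phi> = \<phi> \<circ> \<psi> \<longleftrightarrow>
    (\<exists>(y :: nat \<Rightarrow> 'm) (a :: nat \<Rightarrow> 'r).
       rspan smult (y ` {1..d}) = UNIV \<and>
       (\<forall>j\<in>{1..d}.
          (\<Sum>i=1..n. smult (a i) ((\<phi> ^^ (i - 1)) (y j))) = \<psi> (y j) \<and>
          (\<Sum>i=1..n. smult (a i) ((\<phi> ^^ (i - 1)) (\<phi> (y j)))) = \<psi> (\<phi> (y j))))"
proof -
  interpret nilpotent_endomorphism smult \<phi> n
    using assms by unfold_locales
  obtain w where "top_vector smult \<phi> n w"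
    using exists_top_vector[OF assms(3)] by blast
  then interpret top_vector smult \<phi> n w .
  have cyclic: "cyclic_vector w"
    using cyclic_vector_if_indecomposable assms(3,5) .
  have "d = n"
    using comp_length_eq[OF comp_series_ker[OF cyclic]] assms(6) by simp
  then show ?thesis
    using polynomial_on_orbit_if_commute[OF cyclic assms(9)]
      commute_if_polynomial_on_generators[OF assms(4,9)] by blast
qed

end
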